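(* Let $T = F \cup R$ be a ground ProbLog program (with the conventions in the context) and let $(AAF^T, PS^T, \Vdash^T)$ be the PAA framework corresponding to $T$, where $AAF^T=(Args^T,Att^T)$ is finite and $PS^T=(\mathcal{W}^T,P)$. Then for every ground atom $q$: \begin{enumerate} \item $P_s(q\mid T) = Prob_G(q)$; \item $P_s(q\mid T) \le \sum_{\alpha \in Args^T,\ \alpha \text{ has claim } q} Prob_G(\alpha)$. \end{enumerate}
   Context: \textbf{Logic programs.} A (ground) logic program (LP) is a set of rules $l_0 \leftarrow l_1,\dots,l_m$ ($m\ge 0$), where $l_0$ is a ground atom (the head) and each $l_i$ ($i\ge1$) is a ground atom or a negation-as-failure literal $not\,a$ for a ground atom $a$; if $m=0$ the rule is a fact. For an LP $L$ and ground atom $q$, $L\models q$ means that $q$ is true in the (possibly three-valued) well-founded model of $L$. \textbf{ProbLog.} A ground ProbLog program is $T=F\cup R$ where $R$ is a ground LP and $F$ is a finite set of probabilistic facts $p::l\leftarrow$ with $p\in[0,1]$ and $l$ a ground atom that is not the head of any rule in $R$; each atom $l$ occurs in at most one probabilistic fact. For $F'\subseteq\{l\leftarrow \mid p::l\leftarrow\in F\}$ and $L=F'\cup R$, set $P(L\mid T)=\prod_{l\leftarrow\in F',\,p::l\leftarrow\in F} p\cdot\prod_{l\leftarrow\notin F',\,p::l\leftarrow\in F}(1-p)$. The success probability of a ground atom $q$ is $P_s(q\mid T)=\sum_{L=F'\cup R,\ F'\subseteq\{l\leftarrow\mid p::l\leftarrow\in F\},\ L\models q} P(L\mid T)$. \textbf{Abstract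 argumentation.} An AA framework is a pair $(Args,Att)$ with $Att\subseteq Args\times Args$; $G(\cdot)$ denotes its grounded extension (Dung's semantics). \textbf{ABA.} A flat ABA framework is $\langle\mathcal{L},\mathcal{R},\mathcal{A},\overline{\cdot}\rangle$ with language $\mathcal{L}$, set $\mathcal{R}$ of rules $s_0\leftarrow s_1,\dots,s_m$ ($s_i\in\mathcal{L}$), nonempty assumptions $\mathcal{A}\subseteq\mathcal{L}$ none of which is the head of a rule, and a total contrary map $\overline{\cdot}:\mathcal{A}\to\mathcal{L}$. An argument for claim $s\in\mathcal{L}$ supported by $A\subseteq\mathcal{A}$ and $\mathcal{S}\subseteq\mathcal{R}$, written $A\vdash^{\mathcal{S}} s$, is a finite tree with root labelled $s$, leaves labelled $true$ or by assumptions in $A$, each non-leaf node $s'$ having as children the body elements of one rule in $\mathcal{S}$ with head $s'$ (a single child $true$ if the body is empty), and $\mathcal{S}$ the set of rules so used. Argument $A_1\vdash^{\mathcal{S}_1}s_1$ attacks $A_2\vdash^{\mathcal{S}_2}s_2$ iff $s_1=\overline{a}$ for some $a\in A_2$. The AA framework for the ABA framework is $(Args,Att)$ with all arguments and these attacks. \textbf{ProbLog-ABA.} For $T=F\cup R$, let $HB$ be the set of ground atoms occurring in $T$, $HB^{not}=\{not\,p\mid p\in HB\}$, $\chi$ a fresh symbol, and $\mathcal{F}=\{l\mid (p::l\leftarrow)\in F\}$. The ProbLog-ABA framework corresponding to $T$ has $\mathcal{R}=R$, $\mathcal{L}=HB\cup HB^{not}\cup\{\chi\}$, $\mathcal{A}=HB^{not}\cup\mathcal{F}$,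 $\overline{not\,p}=p$, and $\overline{\phi}=\chi$ for $\phi\in\mathcal{F}$. Let $AAF^T=(Args^T,Att^T)$ be its AA framework. \textbf{PAA framework corresponding to $T$.} It is $(AAF^T,PS^T,\Vdash^T)$ where $\mathcal{W}^T=2^{\mathcal{F}}$, $P(w)=\prod_{l\in w,\,p::l\leftarrow\in F}p\cdot\prod_{l\in\mathcal{F}\setminus w,\,p::l\leftarrow\in F}(1-p)$, and for $\alpha=A\vdash^{\mathcal{S}}s\in Args^T$, $w\Vdash^T\alpha$ iff $A\cap\mathcal{F}\subseteq w$. For $w\in\mathcal{W}^T$, $AAF^T_w=(Args_w,Att_w)$ with $Args_w=\{\alpha\in Args^T\mid w\Vdash^T\alpha\}$ and $Att_w=Att^T\cap(Args_w\times Args_w)$. The grounded probability of an argument is $Prob_G(\alpha)=\sum_{w\in\mathcal{W}^T:\ \alpha\in G(AAF^T_w)}P(w)$, and the grounded probability of a ground query $q$ is $Prob_G(q)=\sum_{w\in\mathcal{W}^T:\ \exists\alpha\in G(AAF^T_w)\text{ with claim }q}P(w)$. *)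

theory Defs
  imports Complex_Main "HOL-Library.Product_Order"
begin

text \<open>Literals of ground logic programs: an atom or a negation-as-failure literal.\<close>
datatype 'a lit = Pos 'a | Neg 'a

text \<open>A ground rule  h <- l1,...,lm  is a pair (h, [l1,...,lm]); a fact has empty body.\<close>
type_synonym 'a rule = "'a \<times> 'a lit list"

fun lit_atom :: "'a lit \<Rightarrow> 'a" where
  "lit_atom (Pos a) = a" | "lit_atom (Neg a) = a"

text \<open>Partial interpretations (T, F): sets of atoms true and false.\<close>
fun lit_true :: "'a set \<times> 'a set \<Rightarrow> 'a lit \<Rightarrow> bool" where
  "lit_true I (Pos b) = (b \<in> fst I)"
| "lit_true I (Neg b) = (b \<in> snd I)"

fun lit_false :: "'a set \<times> 'a set \<Rightarrow> 'a lit \<Rightarrow> bool" where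
  "lit_false I (Pos b) = (b \<in> snd I)"
| "lit_false I (Neg b) = (b \<in> fst I)"

definition unfounded :: "'a rule set \<Rightarrow> 'a set \<times> 'a set \<Rightarrow> 'a set \<Rightarrow> bool" where
  "unfounded P I U \<longleftrightarrow>
     (\<forall>a\<in>U. \<forall>(h, body)\<in>P. h = a \<longrightarrow>
        (\<exists>l\<in>set body. lit_false I l \<or> (\<exists>b. l = Pos b \<and> b \<in> U)))"

definition greatest_unfounded :: "'a rule set \<Rightarrow> 'a set \<times> 'a set \<Rightarrow> 'a set" where
  "greatest_unfounded P I = \<Union>{U. unfounded P I U}"

definition T_op :: "'a rule set \<Rightarrow> 'a set \<times> 'a set \<Rightarrow> 'a set" where
  "T_op P I = {h. \<exists>body. (h, body) \<in> P \<and> (\<forall>l\<in>set body. lit_true I l)}"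

definition W_op :: "'a rule set \<Rightarrow> 'a set \<times> 'a set \<Rightarrow> 'a set \<times> 'a set" where
  "W_op P I = (T_op P I, greatest_unfounded P I)"

definition wf_model :: "'a rule set \<Rightarrow> 'a set \<times> 'a set" where
  "wf_model P = lfp (W_op P)"

definition lp_entails :: "'a rule set \<Rightarrow> 'a \<Rightarrow> bool" where
  "lp_entails P q \<longleftrightarrow> q \<in> fst (wf_model P)"

text \<open>A ground ProbLog program T = F \<union> R is given by the LP R, the set Fa of atoms
  of probabilistic facts and the probability p l of the fact  p l :: l <- .
  (Using a function makes each atom occur in at most one probabilistic fact.)\<close>
definition problog :: "'a rule set \<Rightarrow> 'a set \<Rightarrow> ('a \<Rightarrow> real) \<Rightarrow> bool" where
  "problog R Fa p \<longleftrightarrow> finite R \<and> finite Fa \<and> (\<forall>l\<in>Fa. 0 \<le> p l \<and> p l \<le> 1)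
     \<and> (\<forall>l\<in>Fa. \<forall>(h, body)\<in>R. h \<noteq> l)"

definition facts_of :: "'a set \<Rightarrow> 'a rule set" where
  "facts_of F' = {(l, []) | l. l \<in> F'}"

text \<open>P(w) for a selection w of the probabilistic facts (= P(L|T) and the PAA P(w)).\<close>
definition world_prob :: "'a set \<Rightarrow> ('a \<Rightarrow> real) \<Rightarrow> 'a set \<Rightarrow> real" where
  "world_prob Fa p w = (\<Prod>l\<in>w. p l) * (\<Prod>l\<in>Fa - w. 1 - p l)"

definition success_prob :: "'a rule set \<Rightarrow> 'a set \<Rightarrow> ('a \<Rightarrow> real) \<Rightarrow> 'a \<Rightarrow> real" where
  "success_prob R Fa p q =
     (\<Sum>F'\<in>{F'. F' \<subseteq> Fa \<and> lp_entails (facts_of F' \<union> R) q}. world_prob Fa p F')"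

definition defended :: "'b set \<Rightarrow> ('b \<times> 'b) set \<Rightarrow> 'b set \<Rightarrow> 'b set" where
  "defended Args Att S = {a \<in> Args. \<forall>b\<in>Args. (b, a) \<in> Att \<longrightarrow> (\<exists>c\<in>S. (c, b) \<in> Att)}"

definition grounded :: "'b set \<Rightarrow> ('b \<times> 'b) set \<Rightarrow> 'b set" where
  "grounded Args Att = lfp (defended Args Att)"

text \<open>Sentences of the language HB \<union> HB^not \<union> {chi}.\<close>
datatype 'a sent = Atm 'a | NotS 'a | Chi

fun sent_of_lit :: "'a lit \<Rightarrow> 'a sent" where
  "sent_of_lit (Pos a) = Atm a" | "sent_of_lit (Neg a) = NotS a"

definition herbrand_base :: "'a rule set \<Rightarrow> 'a set \<Rightarrow> 'a set" where
  "herbrand_base R Fa = Fa \<union> {h. \<exists>body. (h, body) \<in> R}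
     \<union> {lit_atom l | l h body. (h, body) \<in> R \<and> l \<in> set body}"

definition assumptions :: "'a rule set \<Rightarrow> 'a set \<Rightarrow> 'a sent set" where
  "assumptions R Fa = NotS ` herbrand_base R Fa \<union> Atm ` Fa"

text \<open>Contrary map: contrary (not p) = p, contrary phi = chi for phi in F.\<close>
fun contrary :: "'a sent \<Rightarrow> 'a sent" where
  "contrary (NotS p) = Atm p"
| "contrary (Atm p) = Chi"
| "contrary Chi = Chi"

text \<open>Argument trees: a leaf labelled by an assumption, or a node labelled with the head
  of a rule whose children are the trees for its body elements (no children encodes
  the single child true for an empty body).\<close>
datatype 'a argtree = AsmLeaf "'a sent" | RuleNode "'a rule" "'a argtree list"

fun claim :: "'a argtree \<Rightarrow> 'a sent" where
  "claim (AsmLeaf s) = s"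
| "claim (RuleNode r ts) = Atm (fst r)"

fun asms :: "'a argtree \<Rightarrow> 'a sent set" where
  "asms (AsmLeaf s) = {s}"
| "asms (RuleNode r ts) = (\<Union>t\<in>set ts. asms t)"

fun rules_used :: "'a argtree \<Rightarrow> 'a rule set" where
  "rules_used (AsmLeaf s) = {}"
| "rules_used (RuleNode r ts) = insert r (\<Union>t\<in>set ts. rules_used t)"

fun valid_arg :: "'a rule set \<Rightarrow> 'a sent set \<Rightarrow> 'a argtree \<Rightarrow> bool" where
  "valid_arg R A (AsmLeaf s) = (s \<in> A)"
| "valid_arg R A (RuleNode r ts) =
     (r \<in> R \<and> map claim ts = map sent_of_lit (snd r) \<and> (\<forall>t\<in>set ts. valid_arg R A t))"

definition args :: "'a rule set \<Rightarrow> 'a set \<Rightarrow> 'a argtree set" where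
  "args R Fa = {t. valid_arg R (assumptions R Fa) t}"

definition attacks :: "'a rule set \<Rightarrow> 'a set \<Rightarrow> ('a argtree \<times> 'a argtree) set" where
  "attacks R Fa = {(a, b). a \<in> args R Fa \<and> b \<in> args R Fa \<and>
                          (\<exists>x\<in>asms b. claim a = contrary x)}"

definition holds_in :: "'a set \<Rightarrow> 'a set \<Rightarrow> 'a argtree \<Rightarrow> bool" where
  "holds_in Fa w \<alpha> \<longleftrightarrow> {\<phi> \<in> Fa. Atm \<phi> \<in> asms \<alpha>} \<subseteq> w"

definition args_w :: "'a rule set \<Rightarrow> 'a set \<Rightarrow> 'a set \<Rightarrow> 'a argtree set" where
  "args_w R Fa w = {\<alpha> \<in> args R Fa. holds_in Fa w \<alpha>}"

definition att_w :: "'a rule set \<Rightarrow> 'a set \<Rightarrow> 'a set \<Rightarrow> ('a argtree \<times> 'a argtree) set" where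
  "att_w R Fa w = attacks R Fa \<inter> (args_w R Fa w \<times> args_w R Fa w)"

definition probG_arg :: "'a rule set \<Rightarrow> 'a set \<Rightarrow> ('a \<Rightarrow> real) \<Rightarrow> 'a argtree \<Rightarrow> real" where
  "probG_arg R Fa p \<alpha> =
     (\<Sum>w\<in>{w. w \<subseteq> Fa \<and> \<alpha> \<in> grounded (args_w R Fa w) (att_w R Fa w)}. world_prob Fa p w)"

definition probG_query :: "'a rule set \<Rightarrow> 'a set \<Rightarrow> ('a \<Rightarrow> real) \<Rightarrow> 'a \<Rightarrow> real" where
  "probG_query R Fa p q =
     (\<Sum>w\<in>{w. w \<subseteq> Fa \<and> (\<exists>\<alpha>\<in>grounded (args_w R Fa w) (att_w R Fa w). claim \<alpha> = Atm q)}.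
        world_prob Fa p w)"

end

theory Submission
  imports Defs
begin

text \<open>For a fixed world \<open>w\<close>, \<open>q\<close> is true in the well-founded model of \<open>w \<union> R\<close> iff some
  grounded argument of the world's framework claims \<open>q\<close>; summing over worlds gives the
  equality, and the union bound over the finitely many arguments for \<open>q\<close> the inequality.
  Soundness: the atoms all of whose arguments are attacked by arguments with only false
  negative assumptions form an unfounded set, so the grounded extension (a least fixpoint)
  contains only such arguments, and their claims are true by induction on the tree.
  Completeness: along the fixpoint iteration of the well-founded operator, every true atom
  gets a grounded argument and every argument for a false atom is counter-attacked by one.\<close>

section \<open>Fixpoint characterisations\<close>

lemma W_op_mono: "mono (W_op P)"
proof (rule monoI)
  fix I J :: "'a set \<times> 'a set"
  assume "I \<le> J"
  then have "fst I \<subseteq> fst J" "snd I \<subseteq> snd J" by (auto simp: less_eq_prod_def)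
  then have lits: "lit_true I l \<Longrightarrow> lit_true J l" "lit_false I l \<Longrightarrow> lit_false J l" for l
    by (cases l; auto)+
  have "T_op P I \<subseteq> T_op P J"
    unfolding T_op_def using lits(1) by blast
  moreover have "unfounded P I U \<Longrightarrow> unfounded P J U" for U
    unfolding unfounded_def using lits(2) by fast
  then have "greatest_unfounded P I \<subseteq> greatest_unfounded P J"
    unfolding greatest_unfounded_def by blast
  ultimately show "W_op P I \<le> W_op P J" by (simp add: W_op_def less_eq_prod_def)
qed

lemma W_op_wf_model: "W_op P (wf_model P) = wf_model P"
  unfolding wf_model_def by (rule lfp_fixpoint[OF W_op_mono])

lemma fst_wf_model: "fst (wf_model P) = T_op P (wf_model P)"
  by (metis W_op_wf_model W_op_def fst_conv)

lemma snd_wf_model: "snd (wf_model P) = greatest_unfounded P (wf_model P)"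
  by (metis W_op_wf_model W_op_def snd_conv)

lemma defended_mono: "mono (defended Args Att)"
  unfolding mono_def defended_def by blast

lemma grounded_subset: "grounded Args Att \<subseteq> Args"
  unfolding grounded_def by (rule lfp_lowerbound) (auto simp: defended_def)

lemma mem_grounded_iff:
  "\<alpha> \<in> grounded Args Att \<longleftrightarrow>
     \<alpha> \<in> Args \<and> (\<forall>\<beta>\<in>Args. (\<beta>, \<alpha>) \<in> Att \<longrightarrow> (\<exists>\<gamma>\<in>grounded Args Att. (\<gamma>, \<beta>) \<in> Att))"
  by (subst grounded_def, subst lfp_unfold[OF defended_mono])
    (simp add: defended_def flip: grounded_def)

section \<open>Argument trees\<close>

lemma claim_eq_NotS: "claim t = NotS c \<Longrightarrow> t = AsmLeaf (NotS c)"
  by (cases t) auto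

lemma child_with_claim:
  "map claim ts = map sent_of_lit body \<Longrightarrow> l \<in> set body \<Longrightarrow> \<exists>t\<in>set ts. claim t = sent_of_lit l"
  by (metis image_iff list.set_map)

lemma obtain_children:
  assumes "\<forall>l\<in>set body. \<exists>t. Q t \<and> claim t = sent_of_lit l"
  shows "\<exists>ts. map claim ts = map sent_of_lit body \<and> (\<forall>t\<in>set ts. Q t)"
  using assms
proof (induction body)
  case (Cons l body)
  then obtain t ts where "Q t" "claim t = sent_of_lit l"
    "map claim ts = map sent_of_lit body" "\<forall>t\<in>set ts. Q t" by auto
  then show ?case by (intro exI[of _ "t # ts"]) simp
qed simp

lemma mem_facts_of_iff: "(h, body) \<in> facts_of w \<longleftrightarrow> h \<in> w \<and> body = []"
  unfolding facts_of_def by auto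

lemma mem_args_w_iff:
  "\<alpha> \<in> args_w R Fa w \<longleftrightarrow> valid_arg R (assumptions R Fa) \<alpha> \<and> holds_in Fa w \<alpha>"
  unfolding args_w_def args_def by auto

lemma mem_att_w_iff:
  "(\<gamma>, \<beta>) \<in> att_w R Fa w \<longleftrightarrow>
     \<gamma> \<in> args_w R Fa w \<and> \<beta> \<in> args_w R Fa w \<and> (\<exists>x\<in>asms \<beta>. claim \<gamma> = contrary x)"
  unfolding att_w_def attacks_def args_w_def by auto

lemma RuleNode_args_w_iff:
  "RuleNode r ts \<in> args_w R Fa w \<longleftrightarrow>
     r \<in> R \<and> map claim ts = map sent_of_lit (snd r) \<and> (\<forall>t\<in>set ts. t \<in> args_w R Fa w)"
  by (auto simp: mem_args_w_iff holds_in_def)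

lemma AsmLeaf_Atm_args_w_iff: "AsmLeaf (Atm b) \<in> args_w R Fa w \<longleftrightarrow> b \<in> Fa \<and> b \<in> w"
  by (auto simp: mem_args_w_iff holds_in_def assumptions_def)

lemma AsmLeaf_NotS_args_w:
  assumes "(h, body) \<in> R" "Neg c \<in> set body"
  shows "AsmLeaf (NotS c) \<in> args_w R Fa w"
proof -
  have "c \<in> herbrand_base R Fa"
    using assms unfolding herbrand_base_def by (force intro: exI[of _ "Neg c"])
  then show ?thesis by (simp add: mem_args_w_iff holds_in_def assumptions_def)
qed

lemma claim_args_w_not_Chi: "\<gamma> \<in> args_w R Fa w \<Longrightarrow> claim \<gamma> \<noteq> Chi"
  by (cases \<gamma>) (auto simp: mem_args_w_iff assumptions_def)

lemma attacks_RuleNode_iff: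
  "RuleNode r ts \<in> args_w R Fa w \<Longrightarrow>
     (\<gamma>, RuleNode r ts) \<in> att_w R Fa w \<longleftrightarrow> (\<exists>t\<in>set ts. (\<gamma>, t) \<in> att_w R Fa w)"
  by (auto simp: mem_att_w_iff RuleNode_args_w_iff)

section \<open>Grounded arguments versus the well-founded model of a world\<close>

locale problog_world =
  fixes R :: "'a rule set" and Fa w :: "'a set"
  assumes world_subset: "w \<subseteq> Fa"
begin

abbreviation "Args \<equiv> args_w R Fa w"
abbreviation "Att \<equiv> att_w R Fa w"
abbreviation "G \<equiv> grounded Args Att"
abbreviation "Prog \<equiv> facts_of w \<union> R"
abbreviation "WFM \<equiv> wf_model Prog"

lemma AsmLeaf_Atm_args_iff: "AsmLeaf (Atm b) \<in> Args \<longleftrightarrow> b \<in> w"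
  using world_subset by (auto simp: AsmLeaf_Atm_args_w_iff)

lemma grounded_counterattacks: "\<alpha> \<in> G \<Longrightarrow> (\<beta>, \<alpha>) \<in> Att \<Longrightarrow> \<exists>\<gamma>\<in>G. (\<gamma>, \<beta>) \<in> Att"
  by (meson mem_att_w_iff mem_grounded_iff)

lemma mem_grounded_if_attackers_counterattacked:
  assumes "\<alpha> \<in> Args"
    and "\<And>x \<beta>. x \<in> asms \<alpha> \<Longrightarrow> \<beta> \<in> Args \<Longrightarrow> claim \<beta> = contrary x \<Longrightarrow> \<exists>\<gamma>\<in>G. (\<gamma>, \<beta>) \<in> Att"
  shows "\<alpha> \<in> G"
  using assms by (subst mem_grounded_iff) (auto simp: mem_att_w_iff)

definition neg_false_args :: "'a argtree set" where
  "neg_false_args = {\<alpha> \<in> Args. \<forall>b. NotS b \<in> asms \<alpha> \<longrightarrow> b \<in> snd WFM}"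

lemma neg_false_arg_claim_true:
  "\<alpha> \<in> neg_false_args \<Longrightarrow> claim \<alpha> = Atm q \<Longrightarrow> q \<in> fst WFM"
proof (induction \<alpha> arbitrary: q)
  case (AsmLeaf s)
  then have "q \<in> w" by (simp add: neg_false_args_def AsmLeaf_Atm_args_iff)
  then have "(q, []) \<in> Prog" by (simp add: mem_facts_of_iff)
  then show ?case by (subst fst_wf_model) (force simp: T_op_def)
next
  case (RuleNode r ts)
  have r: "r \<in> R" "map claim ts = map sent_of_lit (snd r)" "q = fst r"
    using RuleNode.prems by (simp_all add: neg_false_args_def RuleNode_args_w_iff)
  have children: "\<forall>t\<in>set ts. t \<in> neg_false_args"
    using RuleNode.prems(1) by (auto simp: neg_false_args_def RuleNode_args_w_iff)
  have "lit_true WFM l" if l: "l \<in> set (snd r)" for l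
  proof -
    obtain t where t: "t \<in> set ts" "claim t = sent_of_lit l"
      using child_with_claim[OF r(2) l] by blast
    show ?thesis
    proof (cases l)
      case (Pos c)
      then show ?thesis using RuleNode.IH[OF t(1)] children t by simp
    next
      case (Neg c)
      then have "t = AsmLeaf (NotS c)" using t(2) claim_eq_NotS by simp
      then have "NotS c \<in> asms (RuleNode r ts)" using t(1) by force
      then show ?thesis using RuleNode.prems(1) Neg by (simp add: neg_false_args_def)
    qed
  qed
  then have "fst r \<in> T_op Prog WFM" unfolding T_op_def using r(1) by force
  then show ?case using fst_wf_model r(3) by metis
qed

definition refuted_atoms :: "'a set" where
  "refuted_atoms = {b. \<forall>\<beta>\<in>Args. claim \<beta> = Atm b \<longrightarrow> (\<exists>\<gamma>\<in>neg_false_args. (\<gamma>, \<beta>) \<in> Att)}"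

lemma facts_not_refuted:
  assumes "a \<in> w"
  shows "a \<notin> refuted_atoms"
proof
  assume "a \<in> refuted_atoms"
  moreover have "AsmLeaf (Atm a) \<in> Args" using assms by (simp add: AsmLeaf_Atm_args_iff)
  ultimately obtain \<gamma> where "(\<gamma>, AsmLeaf (Atm a)) \<in> Att"
    unfolding refuted_atoms_def by auto
  then show False using claim_args_w_not_Chi by (auto simp: mem_att_w_iff)
qed

lemma refuted_atom_rule_body:
  assumes "a \<in> refuted_atoms" and rule: "(a, body) \<in> Prog"
  shows "\<exists>l\<in>set body. lit_false WFM l \<or> (\<exists>b. l = Pos b \<and> b \<in> refuted_atoms)"
proof (rule ccontr)
  assume not_unfounded: "\<not> (\<exists>l\<in>set body. lit_false WFM l \<or> (\<exists>b. l = Pos b \<and> b \<in> refuted_atoms))"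
  have "(a, body) \<in> R" using rule facts_not_refuted assms(1) by (auto simp: mem_facts_of_iff)
  define unattacked where
    "unattacked t \<longleftrightarrow> t \<in> Args \<and> \<not> (\<exists>\<gamma>\<in>neg_false_args. (\<gamma>, t) \<in> Att)" for t
  have "\<exists>t. unattacked t \<and> claim t = sent_of_lit l" if l: "l \<in> set body" for l
  proof (cases l)
    case (Pos c)
    then have "c \<notin> refuted_atoms" using not_unfounded l by blast
    then show ?thesis using Pos by (auto simp: unattacked_def refuted_atoms_def)
  next
    case (Neg c)
    then have "c \<notin> fst WFM" using not_unfounded l by auto
    then have "unattacked (AsmLeaf (NotS c))"
      using AsmLeaf_NotS_args_w[OF \<open>(a, body) \<in> R\<close>] l Neg neg_false_arg_claim_true
      by (auto simp: unattacked_def mem_att_w_iff)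
    then show ?thesis using Neg by auto
  qed
  then obtain ts where ts: "map claim ts = map sent_of_lit body" "\<forall>t\<in>set ts. unattacked t"
    using obtain_children[of body unattacked] by blast
  then have node: "RuleNode (a, body) ts \<in> Args"
    using \<open>(a, body) \<in> R\<close> by (auto simp: RuleNode_args_w_iff unattacked_def)
  then have "unattacked (RuleNode (a, body) ts)"
    using ts(2) by (auto simp: unattacked_def attacks_RuleNode_iff)
  moreover have "\<exists>\<gamma>\<in>neg_false_args. (\<gamma>, RuleNode (a, body) ts) \<in> Att"
    using assms(1) node unfolding refuted_atoms_def by simp
  ultimately show False unfolding unattacked_def by blast
qed

lemma refuted_atoms_false: "refuted_atoms \<subseteq> snd WFM"
proof -
  have "unfounded Prog WFM refuted_atoms"
    using refuted_atom_rule_body unfolding unfounded_def by blast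
  then show ?thesis by (subst snd_wf_model) (auto simp: greatest_unfounded_def)
qed

lemma grounded_subset_neg_false_args: "G \<subseteq> neg_false_args"
  unfolding grounded_def
proof (rule lfp_induct[OF defended_mono], rule subsetI)
  fix \<alpha>
  assume defended: "\<alpha> \<in> defended Args Att (inf (lfp (defended Args Att)) neg_false_args)"
  then have "\<alpha> \<in> Args" unfolding defended_def by blast
  have "b \<in> refuted_atoms" if "NotS b \<in> asms \<alpha>" for b
    unfolding refuted_atoms_def
  proof (intro CollectI ballI impI)
    fix \<beta> assume "\<beta> \<in> Args" "claim \<beta> = Atm b"
    then have "(\<beta>, \<alpha>) \<in> Att" using \<open>\<alpha> \<in> Args\<close> that by (force simp: mem_att_w_iff)
    then show "\<exists>\<gamma>\<in>neg_false_args. (\<gamma>, \<beta>) \<in> Att"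
      using defended \<open>\<beta> \<in> Args\<close> unfolding defended_def by auto
  qed
  then show "\<alpha> \<in> neg_false_args"
    using \<open>\<alpha> \<in> Args\<close> refuted_atoms_false unfolding neg_false_args_def by blast
qed

text \<open>The invariant of the fixpoint iteration of \<open>W_op Prog\<close> towards \<open>WFM\<close>.\<close>

definition grounded_witnesses :: "'a set \<times> 'a set \<Rightarrow> bool" where
  "grounded_witnesses I \<longleftrightarrow>
     (\<forall>q\<in>fst I. \<exists>\<gamma>\<in>G. claim \<gamma> = Atm q) \<and>
     (\<forall>b\<in>snd I. \<forall>\<beta>\<in>Args. claim \<beta> = Atm b \<longrightarrow> (\<exists>\<gamma>\<in>G. (\<gamma>, \<beta>) \<in> Att))"

lemma unfounded_args_counterattacked:
  assumes witnesses: "grounded_witnesses I" and unf: "unfounded Prog I U"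
  shows "\<beta> \<in> Args \<Longrightarrow> claim \<beta> = Atm b \<Longrightarrow> b \<in> U \<Longrightarrow> \<exists>\<gamma>\<in>G. (\<gamma>, \<beta>) \<in> Att"
proof (induction \<beta> arbitrary: b)
  case (AsmLeaf s)
  then have "(b, []) \<in> Prog" by (simp add: AsmLeaf_Atm_args_iff mem_facts_of_iff)
  then have "\<exists>l\<in>set []. lit_false I l \<or> (\<exists>c. l = Pos c \<and> c \<in> U)"
    using unf AsmLeaf.prems(3) unfolding unfounded_def by fast
  then show ?case by simp
next
  case (RuleNode r ts)
  obtain body where r: "r = (b, body)" using RuleNode.prems(2) by (cases r) simp
  have "r \<in> R" and claims: "map claim ts = map sent_of_lit body"
    using RuleNode.prems(1) r by (simp_all add: RuleNode_args_w_iff)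
  then obtain l where l: "l \<in> set body" "lit_false I l \<or> (\<exists>c. l = Pos c \<and> c \<in> U)"
    using unf RuleNode.prems(3) r unfolding unfounded_def by blast
  obtain t where t: "t \<in> set ts" "claim t = sent_of_lit l"
    using child_with_claim[OF claims l(1)] by blast
  have "t \<in> Args" using RuleNode.prems(1) t(1) by (simp add: RuleNode_args_w_iff)
  show ?case
  proof (cases l)
    case (Pos c)
    then have "\<exists>\<gamma>\<in>G. (\<gamma>, t) \<in> Att"
      using RuleNode.IH[OF t(1) \<open>t \<in> Args\<close>] witnesses l(2) \<open>t \<in> Args\<close> t(2)
      unfolding grounded_witnesses_def by (cases "c \<in> U") auto
    then show ?thesis using attacks_RuleNode_iff[OF RuleNode.prems(1)] t(1) by blast
  next
    case (Neg c)
    then obtain \<gamma> where "\<gamma> \<in> G" "claim \<gamma> = Atm c"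
      using l(2) witnesses unfolding grounded_witnesses_def by auto
    moreover have "t = AsmLeaf (NotS c)" using t(2) Neg claim_eq_NotS by simp
    then have "NotS c \<in> asms (RuleNode r ts)" using t(1) by force
    ultimately have "(\<gamma>, RuleNode r ts) \<in> Att"
      using RuleNode.prems(1) grounded_subset[of Args Att] unfolding mem_att_w_iff by force
    then show ?thesis using \<open>\<gamma> \<in> G\<close> by blast
  qed
qed

lemma AsmLeaf_Atm_grounded: "b \<in> w \<Longrightarrow> AsmLeaf (Atm b) \<in> G"
  by (rule mem_grounded_if_attackers_counterattacked)
    (auto simp: AsmLeaf_Atm_args_iff dest: claim_args_w_not_Chi)

lemma RuleNode_grounded:
  assumes "r \<in> R" "map claim ts = map sent_of_lit (snd r)" and children: "\<forall>t\<in>set ts. t \<in> G"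
  shows "RuleNode r ts \<in> G"
proof (rule mem_grounded_if_attackers_counterattacked)
  show node: "RuleNode r ts \<in> Args"
    using assms grounded_subset by (force simp: RuleNode_args_w_iff)
  fix x \<beta> assume "x \<in> asms (RuleNode r ts)" "\<beta> \<in> Args" "claim \<beta> = contrary x"
  then obtain t where "t \<in> set ts" "(\<beta>, t) \<in> Att"
    using node children grounded_subset by (force simp: mem_att_w_iff)
  then show "\<exists>\<gamma>\<in>G. (\<gamma>, \<beta>) \<in> Att" using grounded_counterattacks children by blast
qed

lemma T_op_grounded_witness:
  assumes witnesses: "grounded_witnesses I" and "q \<in> T_op Prog I"
  shows "\<exists>\<gamma>\<in>G. claim \<gamma> = Atm q"
proof -
  obtain body where rule: "(q, body) \<in> Prog" and body: "\<forall>l\<in>set body. lit_true I l"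
    using assms(2) unfolding T_op_def by blast
  show ?thesis
  proof (cases "(q, body) \<in> facts_of w")
    case True
    then show ?thesis using AsmLeaf_Atm_grounded by (force simp: mem_facts_of_iff)
  next
    case False
    then have "(q, body) \<in> R" using rule by blast
    have "\<exists>t. t \<in> G \<and> claim t = sent_of_lit l" if l: "l \<in> set body" for l
    proof (cases l)
      case (Pos c)
      then show ?thesis using witnesses body l unfolding grounded_witnesses_def by fastforce
    next
      case (Neg c)
      then have "c \<in> snd I" using body l by fastforce
      then have "AsmLeaf (NotS c) \<in> G"
        using witnesses AsmLeaf_NotS_args_w[OF \<open>(q, body) \<in> R\<close>] l Neg
        by (intro mem_grounded_if_attackers_counterattacked)
          (auto simp: grounded_witnesses_def)
      then show ?thesis using Neg by auto
    qed
    then obtain ts where "map claim ts = map sent_of_lit body" "\<forall>t\<in>set ts. t \<in> G"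
      using obtain_children[of body "\<lambda>t. t \<in> G"] by blast
    then have "RuleNode (q, body) ts \<in> G"
      using RuleNode_grounded[OF \<open>(q, body) \<in> R\<close>] by simp
    then show ?thesis by (intro bexI) auto
  qed
qed

lemma grounded_witnesses_W_op:
  assumes "grounded_witnesses I"
  shows "grounded_witnesses (W_op Prog I)"
proof -
  have "\<exists>\<gamma>\<in>G. (\<gamma>, \<beta>) \<in> Att"
    if b: "b \<in> greatest_unfounded Prog I" and "\<beta> \<in> Args" "claim \<beta> = Atm b" for b \<beta>
  proof -
    obtain U where "unfounded Prog I U" "b \<in> U"
      using b unfolding greatest_unfounded_def by blast
    then show ?thesis using unfounded_args_counterattacked[OF assms] that(2,3) by blast
  qed
  then show ?thesis
    using T_op_grounded_witness[OF assms] unfolding grounded_witnesses_def W_op_def by simp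
qed

lemma grounded_witnesses_wf_model: "grounded_witnesses WFM"
  unfolding wf_model_def
proof (induction rule: lfp_ordinal_induct[OF W_op_mono])
  case (1 I)
  then show ?case by (simp add: grounded_witnesses_W_op)
next
  case (2 M)
  then show ?case unfolding grounded_witnesses_def fst_Sup snd_Sup by blast
qed

theorem entails_iff_grounded_claim: "lp_entails Prog q \<longleftrightarrow> (\<exists>\<alpha>\<in>G. claim \<alpha> = Atm q)"
  using grounded_witnesses_wf_model grounded_subset_neg_false_args neg_false_arg_claim_true
  unfolding lp_entails_def grounded_witnesses_def by fast

end

section \<open>Probabilities\<close>

lemma world_prob_nonneg: "problog R Fa p \<Longrightarrow> w \<subseteq> Fa \<Longrightarrow> 0 \<le> world_prob Fa p w"
  unfolding problog_def world_prob_def by (force intro!: mult_nonneg_nonneg prod_nonneg)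

lemma sum_Bex_le_sum_sum:
  fixes f :: "'w \<Rightarrow> 'b::ordered_comm_monoid_add"
  assumes "finite W" "finite A" "\<And>w. w \<in> W \<Longrightarrow> 0 \<le> f w"
  shows "(\<Sum>w\<in>{w \<in> W. \<exists>a\<in>A. P w a}. f w) \<le> (\<Sum>a\<in>A. \<Sum>w\<in>{w \<in> W. P w a}. f w)"
proof -
  have "(\<Sum>w\<in>{w \<in> W. \<exists>a\<in>A. P w a}. f w) = (\<Sum>w\<in>W. if \<exists>a\<in>A. P w a then f w else 0)"
    using assms(1) by (simp add: sum.inter_filter)
  also have "\<dots> \<le> (\<Sum>w\<in>W. \<Sum>a\<in>A. if P w a then f w else 0)"
  proof (rule sum_mono)
    fix w assume "w \<in> W"
    then have nonneg: "\<And>a. 0 \<le> (if P w a then f w else 0)" using assms(3) by simp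
    show "(if \<exists>a\<in>A. P w a then f w else 0) \<le> (\<Sum>a\<in>A. if P w a then f w else 0)"
    proof (cases "\<exists>a\<in>A. P w a")
      case True
      then obtain a where "a \<in> A" "P w a" by blast
      then have "(\<Sum>a\<in>A. if P w a then f w else 0)
          = f w + (\<Sum>a\<in>A - {a}. if P w a then f w else 0)"
        using assms(2) by (simp add: sum.remove)
      also have "\<dots> \<ge> f w" using nonneg by (simp add: sum_nonneg add_increasing2)
      finally show ?thesis using True by simp
    qed (simp add: nonneg sum_nonneg)
  qed
  also have "\<dots> = (\<Sum>a\<in>A. \<Sum>w\<in>{w \<in> W. P w a}. f w)"
    using assms(1) by (subst sum.swap) (simp add: sum.inter_filter)
  finally show ?thesis .
qed

theorem mainTheorem1:
  fixes R :: "'a rule set" and Fa :: "'a set" and p :: "'a \<Rightarrow> real" and q :: 'a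
  assumes "problog R Fa p"
    and "finite (args R Fa)"
  shows "success_prob R Fa p q = probG_query R Fa p q \<and>
         success_prob R Fa p q \<le> (\<Sum>\<alpha>\<in>{\<alpha> \<in> args R Fa. claim \<alpha> = Atm q}. probG_arg R Fa p \<alpha>)"
proof -
  let ?G = "\<lambda>w. grounded (args_w R Fa w) (att_w R Fa w)"
  let ?As = "{\<alpha> \<in> args R Fa. claim \<alpha> = Atm q}"
  have "finite Fa" using assms(1) unfolding problog_def by blast
  have "lp_entails (facts_of w \<union> R) q \<longleftrightarrow> (\<exists>\<alpha>\<in>?G w. claim \<alpha> = Atm q)" if "w \<subseteq> Fa" for w
    using that by (intro problog_world.entails_iff_grounded_claim) (simp add: problog_world_def)
  then have worlds: "{w. w \<subseteq> Fa \<and> lp_entails (facts_of w \<union> R) q} =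
      {w. w \<subseteq> Fa \<and> (\<exists>\<alpha>\<in>?G w. claim \<alpha> = Atm q)}"
    by blast
  have "probG_query R Fa p q = (\<Sum>w\<in>{w \<in> Pow Fa. \<exists>\<alpha>\<in>?As. \<alpha> \<in> ?G w}. world_prob Fa p w)"
    unfolding probG_query_def
    by (rule sum.cong) (use grounded_subset in \<open>fastforce simp: args_w_def\<close>)+
  also have "\<dots> \<le> (\<Sum>\<alpha>\<in>?As. \<Sum>w\<in>{w \<in> Pow Fa. \<alpha> \<in> ?G w}. world_prob Fa p w)"
    using \<open>finite Fa\<close> assms world_prob_nonneg by (intro sum_Bex_le_sum_sum) auto
  also have "\<dots> = (\<Sum>\<alpha>\<in>?As. probG_arg R Fa p \<alpha>)"
    unfolding probG_arg_def by simp
  finally have "probG_query R Fa p q \<le> (\<Sum>\<alpha>\<in>?As. probG_arg R Fa p \<alpha>)" .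
  moreover have "success_prob R Fa p q = probG_query R Fa p q"
    unfolding success_prob_def probG_query_def worlds ..
  ultimately show ?thesis by simp
qed

end
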